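(* For all $x\ge y\ge 1$ and $n>x+y$, the maximum possible number of edges in any $(x,y)$ task-dependency graph of order $n$ produced by the $(x,y)$ edge-addition process is $\binom{n}{2}+1-\binom{x}{2}-\binom{y+1}{2}$.
   Context: A task-dependency graph is a finite directed acyclic graph (no loops, no multiple edges). A vertex is initial if it has in-degree $0$ and terminal if it has out-degree $0$ (an isolated vertex is both). An $(x,y)$ task-dependency graph has exactly $x$ initial and exactly $y$ terminal vertices. The $(x,y)$ edge-addition process on $n$ vertices: start with the empty graph on $\{1,\dots,n\}$ and repeatedly add, uniformly at random, an edge $(a,b)$ with $a<b$ not yet present; if an addition would cause fewer than $x$ initial vertices or fewer than $y$ terminal vertices, it is cancelled. The process halts if the graph after some edge addition is an $(x,y)$ task-dependency graph, or if no more edges can be added; the produced graph is the final graph (over all possible runs). *)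

theory Defs
  imports Main
begin

text \<open>Graphs on vertex set {1..n}; an edge (a,b) always has a < b, so every such
  graph is a DAG without loops or multiple edges.\<close>

definition valid_edge :: "nat \<Rightarrow> nat \<times> nat \<Rightarrow> bool" where
  "valid_edge n e \<longleftrightarrow> 1 \<le> fst e \<and> fst e < snd e \<and> snd e \<le> n"

definition initial_vs :: "nat \<Rightarrow> (nat \<times> nat) set \<Rightarrow> nat set" where
  "initial_vs n E = {v \<in> {1..n}. \<forall>a. (a, v) \<notin> E}"

definition terminal_vs :: "nat \<Rightarrow> (nat \<times> nat) set \<Rightarrow> nat set" where
  "terminal_vs n E = {v \<in> {1..n}. \<forall>b. (v, b) \<notin> E}"

definition is_tdg :: "nat \<Rightarrow> nat \<Rightarrow> nat \<Rightarrow> (nat \<times> nat) set \<Rightarrow> bool" where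
  "is_tdg n x y E \<longleftrightarrow> (\<forall>e\<in>E. valid_edge n e)
     \<and> card (initial_vs n E) = x \<and> card (terminal_vs n E) = y"

definition admissible :: "nat \<Rightarrow> nat \<Rightarrow> nat \<Rightarrow> (nat \<times> nat) set \<Rightarrow> nat \<times> nat \<Rightarrow> bool" where
  "admissible n x y E e \<longleftrightarrow> valid_edge n e \<and> e \<notin> E
     \<and> x \<le> card (initial_vs n (insert e E)) \<and> y \<le> card (terminal_vs n (insert e E))"

text \<open>Graphs reachable by some run of the (x,y) edge-addition process (cancelled additions
  leave the graph unchanged; the process stops once an (x,y) task-dependency graph is reached).\<close>
inductive reachable :: "nat \<Rightarrow> nat \<Rightarrow> nat \<Rightarrow> (nat \<times> nat) set \<Rightarrow> bool"
  for n x y where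
  start: "reachable n x y {}"
| step: "reachable n x y E \<Longrightarrow> \<not> (E \<noteq> {} \<and> is_tdg n x y E) \<Longrightarrow> admissible n x y E e
         \<Longrightarrow> reachable n x y (insert e E)"

definition final_graph :: "nat \<Rightarrow> nat \<Rightarrow> nat \<Rightarrow> (nat \<times> nat) set \<Rightarrow> bool" where
  "final_graph n x y E \<longleftrightarrow> reachable n x y E \<and>
     ((E \<noteq> {} \<and> is_tdg n x y E) \<or> (\<forall>e. \<not> admissible n x y E e))"

end

theory Submission
  imports Defs
begin

text \<open>A graph on \<open>{1..n}\<close> with initial set \<open>I\<close> and terminal set \<open>T\<close> only has edges
  \<open>(u, v)\<close> with \<open>u \<notin> T\<close> and \<open>v \<notin> I\<close>; counting these pairs vertex by vertex shows that
  at least \<open>a\<close> initial and \<open>b\<close> terminal vertices, with \<open>a + b \<le> n + 1\<close>, leave room for at most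
  \<open>C(n,2) - C(a,2) - C(b,2)\<close> edges. A final (x,y) task-dependency graph is one edge more than a
  reachable graph with at least x initial and y terminal vertices and strictly more of one kind;
  as \<open>y \<le> x\<close>, the bound for that predecessor is worst with \<open>y + 1\<close> terminal vertices, which
  gives the claimed maximum. It is attained by taking every edge except those entering
  \<open>1..x\<close> or lying inside \<open>n - y..n\<close>, and then adding the edge \<open>(n - y, n)\<close>.\<close>

lemma Suc_choose_two: "Suc k choose 2 = (k choose 2) + k"
  by (simp add: numeral_2_eq_2)

definition pairs_in :: "'a::linorder set \<Rightarrow> ('a \<times> 'a) set" where
  "pairs_in A = {(u, v). u \<in> A \<and> v \<in> A \<and> u < v}"

lemma finite_pairs_in: "finite A \<Longrightarrow> finite (pairs_in A)"
  by (rule finite_subset[of _ "A \<times> A"]) (auto simp: pairs_in_def)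

lemma pairs_in_insert_max:
  "\<forall>a\<in>A. a < b \<Longrightarrow> pairs_in (insert b A) = pairs_in A \<union> (\<lambda>a. (a, b)) ` A"
  by (auto simp: pairs_in_def)

lemma card_pairs_in: "finite A \<Longrightarrow> card (pairs_in A) = card A choose 2"
proof (induction A rule: finite_linorder_max_induct)
  case empty
  then show ?case by (simp add: pairs_in_def)
next
  case (insert b A)
  have "pairs_in A \<inter> (\<lambda>a. (a, b)) ` A = {}"
    using insert.hyps(2) by (auto simp: pairs_in_def)
  then have "card (pairs_in (insert b A)) = card (pairs_in A) + card A"
    using insert.hyps
    by (simp add: pairs_in_insert_max card_Un_disjoint finite_pairs_in card_image inj_on_def)
  moreover have "b \<notin> A"
    using insert.hyps(2) by blast
  ultimately show ?case
    using insert by (simp add: Suc_choose_two)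
qed

lemma valid_edge_iff_pairs_in: "valid_edge n e \<longleftrightarrow> e \<in> pairs_in {1..n}"
  by (cases e) (auto simp: valid_edge_def pairs_in_def)

definition compatible_pairs :: "nat \<Rightarrow> nat set \<Rightarrow> nat set \<Rightarrow> (nat \<times> nat) set" where
  "compatible_pairs n I T = {(u, v) \<in> pairs_in {1..n}. u \<notin> T \<and> v \<notin> I}"

lemma compatible_pairs_Suc:
  "compatible_pairs (Suc m) I T =
     compatible_pairs m I T \<union> (if Suc m \<in> I then {} else (\<lambda>u. (u, Suc m)) ` ({1..m} - T))"
  by (auto simp: compatible_pairs_def pairs_in_def le_Suc_eq)

lemma finite_compatible_pairs: "finite (compatible_pairs n I T)"
  by (rule finite_subset[OF _ finite_pairs_in[of "{1..n}"]]) (auto simp: compatible_pairs_def)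

lemma card_Int_atLeastAtMost_Suc:
  "card (I \<inter> {1..Suc m}) = card (I \<inter> {1..m}) + (if Suc m \<in> I then 1 else 0)"
proof -
  have "I \<inter> {1..Suc m} = (if Suc m \<in> I then insert (Suc m) (I \<inter> {1..m}) else I \<inter> {1..m})"
    by (auto simp: le_Suc_eq)
  then show ?thesis by auto
qed

lemma card_compatible_pairs_le:
  assumes "a \<le> card (I \<inter> {1..n})" and "b \<le> card (T \<inter> {1..n})" and "a + b \<le> n + 1"
  shows "card (compatible_pairs n I T) + (a choose 2) + (b choose 2) \<le> n choose 2"
  using assms
proof (induction n arbitrary: a b)
  case 0
  then show ?case by (simp add: compatible_pairs_def pairs_in_def)
next
  case (Suc m)
  have disj: "compatible_pairs m I T \<inter> (\<lambda>u. (u, Suc m)) ` ({1..m} - T) = {}"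
    by (auto simp: compatible_pairs_def pairs_in_def)
  have card_I: "card (I \<inter> {1..m}) \<le> m" and card_T: "card (T \<inter> {1..m}) \<le> m"
    using card_mono[of "{1..m}" "I \<inter> {1..m}"] card_mono[of "{1..m}" "T \<inter> {1..m}"] by auto
  have b': "b - 1 \<le> card (T \<inter> {1..m})"
    using Suc.prems(2) card_Int_atLeastAtMost_Suc[of T m] by (auto split: if_splits)
  have b_choose: "b choose 2 = ((b - 1) choose 2) + (b - 1)"
    using Suc_choose_two[of "b - 1"] by (cases b) auto
  show ?case
  proof (cases "Suc m \<in> I")
    case True
    have a': "a - 1 \<le> card (I \<inter> {1..m})"
      using Suc.prems(1) True card_Int_atLeastAtMost_Suc[of I m] by auto
    have ab: "(a - 1) + (b - 1) \<le> m"
      using Suc.prems(3) a' b' card_I card_T by arith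
    have "card (compatible_pairs m I T) + ((a - 1) choose 2) + ((b - 1) choose 2) \<le> m choose 2"
      using Suc.IH[OF a' b'] ab by simp
    moreover have "a choose 2 = ((a - 1) choose 2) + (a - 1)"
      using Suc_choose_two[of "a - 1"] by (cases a) auto
    ultimately show ?thesis
      using True ab b_choose by (simp add: compatible_pairs_Suc Suc_choose_two)
  next
    case False
    have a: "a \<le> card (I \<inter> {1..m})"
      using Suc.prems(1) False card_Int_atLeastAtMost_Suc[of I m] by auto
    have "card (compatible_pairs m I T) + (a choose 2) + ((b - 1) choose 2) \<le> m choose 2"
      using Suc.prems(3) a card_I by (intro Suc.IH[OF a b']) arith
    moreover have "card ((\<lambda>u. (u, Suc m)) ` ({1..m} - T)) = m - card (T \<inter> {1..m})"
      by (simp add: card_image inj_on_def card_Diff_subset_Int Int_commute)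
    ultimately show ?thesis
      using False finite_compatible_pairs[of m I T] disj b' card_T b_choose
      by (simp add: compatible_pairs_Suc Suc_choose_two card_Un_disjoint)
  qed
qed

lemma finite_initial_vs: "finite (initial_vs n G)"
  by (rule finite_subset[of _ "{1..n}"]) (auto simp: initial_vs_def)

lemma finite_terminal_vs: "finite (terminal_vs n G)"
  by (rule finite_subset[of _ "{1..n}"]) (auto simp: terminal_vs_def)

lemma card_initial_vs_antimono: "G \<subseteq> H \<Longrightarrow> card (initial_vs n H) \<le> card (initial_vs n G)"
  by (rule card_mono[OF finite_initial_vs]) (auto simp: initial_vs_def)

lemma card_terminal_vs_antimono: "G \<subseteq> H \<Longrightarrow> card (terminal_vs n H) \<le> card (terminal_vs n G)"
  by (rule card_mono[OF finite_terminal_vs]) (auto simp: terminal_vs_def)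

lemma initial_vs_insert: "initial_vs n (insert (a, b) E) = initial_vs n E - {b}"
  by (auto simp: initial_vs_def)

lemma terminal_vs_insert: "terminal_vs n (insert (a, b) E) = terminal_vs n E - {a}"
  by (auto simp: terminal_vs_def)

lemma initial_vs_empty: "initial_vs n {} = {1..n}"
  by (auto simp: initial_vs_def)

lemma finite_valid_edges: "\<forall>e\<in>G. valid_edge n e \<Longrightarrow> finite G"
  by (rule finite_subset[OF _ finite_pairs_in[of "{1..n}"]]) (auto simp: valid_edge_iff_pairs_in)

lemma reachable_valid_edges: "reachable n x y E \<Longrightarrow> \<forall>e\<in>E. valid_edge n e"
  by (induction rule: reachable.induct) (auto simp: admissible_def)

lemma card_edges_le:
  assumes "\<forall>e\<in>G. valid_edge n e"
    and "a \<le> card (initial_vs n G)" and "b \<le> card (terminal_vs n G)" and "a + b \<le> n + 1"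
  shows "card G + (a choose 2) + (b choose 2) \<le> n choose 2"
proof -
  let ?I = "initial_vs n G" and ?T = "terminal_vs n G"
  have "G \<subseteq> compatible_pairs n ?I ?T"
    using assms(1)
    by (auto simp: compatible_pairs_def valid_edge_iff_pairs_in initial_vs_def terminal_vs_def)
  then have "card G \<le> card (compatible_pairs n ?I ?T)"
    by (rule card_mono[OF finite_compatible_pairs])
  moreover have "?I \<inter> {1..n} = ?I" and "?T \<inter> {1..n} = ?T"
    by (auto simp: initial_vs_def terminal_vs_def)
  ultimately show ?thesis
    using card_compatible_pairs_le[of a ?I n b ?T] assms(2-4) by simp
qed

lemma card_final_tdg_le:
  assumes "y \<le> x" and "x + y < n" and "final_graph n x y E" and "is_tdg n x y E"
  shows "card E + (x choose 2) + ((y + 1) choose 2) \<le> (n choose 2) + 1"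
proof -
  have "E \<noteq> {}"
    using assms(2,4) by (auto simp: is_tdg_def initial_vs_empty)
  moreover have "reachable n x y E"
    using assms(3) by (simp add: final_graph_def)
  ultimately obtain E0 e where E: "E = insert e E0" and reach: "reachable n x y E0"
    and not_tdg: "\<not> (E0 \<noteq> {} \<and> is_tdg n x y E0)" and adm: "admissible n x y E0 e"
    by (blast elim: reachable.cases)
  have valid: "\<forall>e\<in>E0. valid_edge n e"
    using reach by (rule reachable_valid_edges)
  have card_E: "card E = card E0 + 1"
    using E adm finite_valid_edges[OF valid] by (simp add: admissible_def)
  have init: "x \<le> card (initial_vs n E0)" and terminal: "y \<le> card (terminal_vs n E0)"
    using assms(4) E card_initial_vs_antimono[of E0 E n] card_terminal_vs_antimono[of E0 E n]
    by (auto simp: is_tdg_def)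
  have "card (initial_vs n E0) \<noteq> x \<or> card (terminal_vs n E0) \<noteq> y"
    using not_tdg valid assms(2) by (cases "E0 = {}") (auto simp: is_tdg_def initial_vs_empty)
  then consider "y + 1 \<le> card (terminal_vs n E0)" | "x + 1 \<le> card (initial_vs n E0)"
    using init terminal by linarith
  then show ?thesis
  proof cases
    case 1
    from card_edges_le[OF valid init 1] assms(2) card_E show ?thesis by simp
  next
    case 2
    from card_edges_le[OF valid 2 terminal] assms(1,2) card_E show ?thesis
      by (simp add: Suc_choose_two)
  qed
qed

lemma reachable_subgraph:
  assumes valid: "\<forall>e\<in>G. valid_edge n e"
    and init: "x \<le> card (initial_vs n G)" and terminal: "y \<le> card (terminal_vs n G)"
    and strict: "x < card (initial_vs n G) \<or> y < card (terminal_vs n G)"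
    and "F \<subseteq> G"
  shows "reachable n x y F"
proof -
  have "finite F"
    using finite_valid_edges[OF valid] \<open>F \<subseteq> G\<close> by (rule finite_subset[rotated])
  then show ?thesis
    using \<open>F \<subseteq> G\<close>
  proof (induction F rule: finite_induct)
    case empty
    show ?case by (rule reachable.start)
  next
    case (insert e F)
    have "card (initial_vs n G) \<le> card (initial_vs n F)"
      and "card (terminal_vs n G) \<le> card (terminal_vs n F)"
      using insert.prems card_initial_vs_antimono card_terminal_vs_antimono by auto
    then have "\<not> (F \<noteq> {} \<and> is_tdg n x y F)"
      using strict by (auto simp: is_tdg_def)
    moreover have "admissible n x y F e"
      using insert valid init terminal card_initial_vs_antimono[of "insert e F" G n]
        card_terminal_vs_antimono[of "insert e F" G n]
      by (auto simp: admissible_def)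
    ultimately show ?case
      using insert by (auto intro: reachable.step)
  qed
qed

definition extremal_predecessor :: "nat \<Rightarrow> nat \<Rightarrow> nat \<Rightarrow> (nat \<times> nat) set" where
  "extremal_predecessor n x y = pairs_in {1..n} - pairs_in {1..x} - pairs_in {n - y..n}"

definition extremal_graph :: "nat \<Rightarrow> nat \<Rightarrow> nat \<Rightarrow> (nat \<times> nat) set" where
  "extremal_graph n x y = insert (n - y, n) (extremal_predecessor n x y)"

lemma initial_vs_extremal_predecessor:
  assumes "1 \<le> x" and "x + y < n"
  shows "initial_vs n (extremal_predecessor n x y) = {1..x}"
proof (intro equalityI subsetI)
  fix v assume "v \<in> initial_vs n (extremal_predecessor n x y)"
  then have "v \<in> {1..n}" and "(1, v) \<notin> extremal_predecessor n x y"
    by (auto simp: initial_vs_def)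
  then show "v \<in> {1..x}"
    using assms by (auto simp: extremal_predecessor_def pairs_in_def)
qed (use assms in \<open>auto simp: initial_vs_def extremal_predecessor_def pairs_in_def\<close>)

lemma terminal_vs_extremal_predecessor:
  assumes "x + y < n"
  shows "terminal_vs n (extremal_predecessor n x y) = {n - y..n}"
proof (intro equalityI subsetI)
  fix u assume "u \<in> terminal_vs n (extremal_predecessor n x y)"
  then have "u \<in> {1..n}" and "(u, n) \<notin> extremal_predecessor n x y"
    by (auto simp: terminal_vs_def)
  then show "u \<in> {n - y..n}"
    using assms by (auto simp: extremal_predecessor_def pairs_in_def)
qed (use assms in \<open>auto simp: terminal_vs_def extremal_predecessor_def pairs_in_def\<close>)

lemma card_extremal_predecessor:
  assumes "x + y < n"
  shows "card (extremal_predecessor n x y) + (x choose 2) + ((y + 1) choose 2) = n choose 2"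
proof -
  have sub: "pairs_in {1..x} \<union> pairs_in {n - y..n} \<subseteq> pairs_in {1..n}"
    using assms by (auto simp: pairs_in_def)
  have "pairs_in {1..x} \<inter> pairs_in {n - y..n} = {}"
    using assms by (auto simp: pairs_in_def)
  then have "card (pairs_in {1..x} \<union> pairs_in {n - y..n}) = (x choose 2) + ((y + 1) choose 2)"
    using assms by (simp add: card_Un_disjoint finite_pairs_in card_pairs_in)
  moreover have "extremal_predecessor n x y =
      pairs_in {1..n} - (pairs_in {1..x} \<union> pairs_in {n - y..n})"
    by (auto simp: extremal_predecessor_def)
  ultimately show ?thesis
    using card_Diff_subset[OF finite_subset[OF sub] sub] card_mono[OF _ sub]
    by (simp add: finite_pairs_in card_pairs_in)
qed

lemma extremal_graph_final_tdg:
  assumes "1 \<le> x" and "1 \<le> y" and "x + y < n"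
  shows "final_graph n x y (extremal_graph n x y)" and "is_tdg n x y (extremal_graph n x y)"
proof -
  let ?pred = "extremal_predecessor n x y" and ?E = "extremal_graph n x y"
  have valid0: "\<forall>e\<in>?pred. valid_edge n e"
    by (auto simp: extremal_predecessor_def valid_edge_iff_pairs_in)
  have init0: "card (initial_vs n ?pred) = x" and terminal0: "card (terminal_vs n ?pred) = y + 1"
    using assms by (simp_all add: initial_vs_extremal_predecessor terminal_vs_extremal_predecessor)
  have "initial_vs n ?E = {1..x}" and "terminal_vs n ?E = {n - y..n} - {n - y}"
    using assms by (auto simp: extremal_graph_def initial_vs_insert terminal_vs_insert
        initial_vs_extremal_predecessor terminal_vs_extremal_predecessor)
  then have init: "card (initial_vs n ?E) = x" and terminal: "card (terminal_vs n ?E) = y"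
    using assms by auto
  have valid_new: "valid_edge n (n - y, n)" and new: "(n - y, n) \<notin> ?pred"
    using assms by (auto simp: valid_edge_def extremal_predecessor_def pairs_in_def)
  show tdg: "is_tdg n x y ?E"
    using valid0 valid_new init terminal by (simp add: is_tdg_def extremal_graph_def)
  have "reachable n x y ?pred"
    using valid0 init0 terminal0 by (intro reachable_subgraph[of ?pred]) auto
  moreover have "\<not> (?pred \<noteq> {} \<and> is_tdg n x y ?pred)"
    using terminal0 by (simp add: is_tdg_def)
  moreover have "admissible n x y ?pred (n - y, n)"
    using valid_new new init terminal by (simp add: admissible_def extremal_graph_def)
  ultimately have "reachable n x y ?E"
    unfolding extremal_graph_def by (rule reachable.step)
  with tdg show "final_graph n x y ?E"
    by (simp add: final_graph_def extremal_graph_def)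
qed

lemma card_extremal_graph:
  assumes "x + y < n"
  shows "card (extremal_graph n x y) + (x choose 2) + ((y + 1) choose 2) = (n choose 2) + 1"
proof -
  have "finite (extremal_predecessor n x y)"
    by (auto simp: extremal_predecessor_def finite_pairs_in)
  moreover have "(n - y, n) \<notin> extremal_predecessor n x y"
    by (auto simp: extremal_predecessor_def pairs_in_def)
  ultimately show ?thesis
    using card_extremal_predecessor[OF assms] by (simp add: extremal_graph_def)
qed

theorem mainTheorem13:
  fixes x y n :: nat
  assumes "1 \<le> y" and "y \<le> x" and "x + y < n"
  shows "(\<exists>E. final_graph n x y E \<and> is_tdg n x y E \<and>
            int (card E) = int (n choose 2) + 1 - int (x choose 2) - int ((y + 1) choose 2))
       \<and> (\<forall>E. final_graph n x y E \<and> is_tdg n x y E \<longrightarrow>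
            int (card E) \<le> int (n choose 2) + 1 - int (x choose 2) - int ((y + 1) choose 2))"
proof (intro conjI allI impI)
  have "1 \<le> x"
    using assms(1,2) by simp
  then show "\<exists>E. final_graph n x y E \<and> is_tdg n x y E \<and>
      int (card E) = int (n choose 2) + 1 - int (x choose 2) - int ((y + 1) choose 2)"
    using extremal_graph_final_tdg[OF _ assms(1,3)] card_extremal_graph[OF assms(3)]
    by (intro exI[of _ "extremal_graph n x y"]) auto
next
  fix E assume "final_graph n x y E \<and> is_tdg n x y E"
  then show "int (card E) \<le> int (n choose 2) + 1 - int (x choose 2) - int ((y + 1) choose 2)"
    using card_final_tdg_le[OF assms(2,3)] by force
qed

end
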